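(* In the category $P_2$, let $f:A\to X$ and $g:B\to X$ be arrows. Let $Y=\{(a,b)\in A\times B : f(a)=g(b)\}$, with the structure inherited from the product geometry $A\times B$ (identity $(e_A,e_B)$ and triple set $\Delta_{A\times B}\cap(Y\times Y\times Y)$), and let $\alpha:Y\to A$, $\alpha(a,b)=a$, and $\beta:Y\to B$, $\beta(a,b)=b$. Then $Y$ is an object of $P_2$, $\alpha,\beta$ are arrows of $P_2$ with $f\circ\alpha=g\circ\beta$, and this square is a pullback in $P_2$: for every object $Z$ and arrows $f':Z\to A$, $g':Z\to B$ of $P_2$ with $f\circ f'=g\circ g'$, there is a unique arrow $\varepsilon:Z\to Y$ of $P_2$ with $\alpha\circ\varepsilon=f'$ and $\beta\circ\varepsilon=g'$, namely $\varepsilon(x)=(f'(x),g'(x))$.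
   Context: A Pasch geometry is a triple $(A,e,\Delta_A)$ with $A$ a set, $e\in A$, $\Delta_A\subseteq A\times A\times A$, such that: (1) for each $a\in A$ there is a unique $b\in A$ with $(a,b,e)\in\Delta_A$, denoted $a^\#$; (2) $e^\#=e$ and $(a^\#)^\#=a$ for all $a$; (3) $(a,b,c)\in\Delta_A$ implies $(b,c,a)\in\Delta_A$; (4) if $(a_1,a_2,a_3),(a_1,a_4,a_5)\in\Delta_A$ then there is $a_6\in A$ with $(a_6,a_4^\#,a_2)\in\Delta_A$ and $(a_6,a_5,a_3^\#)\in\Delta_A$. A geometry is sharp if for all $a,b\in A$ there is at most one $c\in A$ with $(a,b,c)\in\Delta_A$. The product geometry $A\times B$ has identity $(e_A,e_B)$ and $\Delta_{A\times B}=\{((a_1,b_1),(a_2,b_2),(a_3,b_3)) : (a_1,a_2,a_3)\in\Delta_A,(b_1,b_2,b_3)\in\Delta_B\}$. A geometry morphism $f:A\to B$ is a map with $f(e_A)=e_B$ and $(x,y,z)\in\Delta_A\Rightarrow(f(x),f(y),f(z))\in\Delta_B$. A geometry homomorphism is a morphism $f$ such that whenever $(f(x),f(y),b)\in\Delta_B$ there exists $z\in A$ with $b=f(z)$ and $(x,y,z)\in\Delta_A$. $P_2$ is the category whose objects are sharp Pasch geometries and whose arrows are geometry homomorphisms, with composition of maps. *)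

theory Defs
  imports Main
begin

text \<open>A geometry is a triple (carrier, identity, triple set).  Maps between geometries
are HOL functions considered only on the carrier.\<close>

type_synonym 'a geom = "'a set \<times> 'a \<times> ('a \<times> 'a \<times> 'a) set"

definition carr :: "'a geom \<Rightarrow> 'a set" where "carr G = fst G"
definition ident :: "'a geom \<Rightarrow> 'a" where "ident G = fst (snd G)"
definition tri :: "'a geom \<Rightarrow> ('a \<times> 'a \<times> 'a) set" where "tri G = snd (snd G)"

definition sharp_op :: "'a geom \<Rightarrow> 'a \<Rightarrow> 'a" where
  "sharp_op G a = (THE b. b \<in> carr G \<and> (a, b, ident G) \<in> tri G)"

definition pasch_geometry :: "'a geom \<Rightarrow> bool" where
  "pasch_geometry G \<longleftrightarrow>
     ident G \<in> carr G \<and> tri G \<subseteq> carr G \<times> carr G \<times> carr G \<and>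
     (\<forall>a\<in>carr G. \<exists>!b. b \<in> carr G \<and> (a, b, ident G) \<in> tri G) \<and>
     sharp_op G (ident G) = ident G \<and>
     (\<forall>a\<in>carr G. sharp_op G (sharp_op G a) = a) \<and>
     (\<forall>a b c. (a, b, c) \<in> tri G \<longrightarrow> (b, c, a) \<in> tri G) \<and>
     (\<forall>a1 a2 a3 a4 a5. (a1, a2, a3) \<in> tri G \<and> (a1, a4, a5) \<in> tri G \<longrightarrow>
        (\<exists>a6\<in>carr G. (a6, sharp_op G a4, a2) \<in> tri G \<and> (a6, a5, sharp_op G a3) \<in> tri G))"

definition sharp_geometry :: "'a geom \<Rightarrow> bool" where
  "sharp_geometry G \<longleftrightarrow> (\<forall>a\<in>carr G. \<forall>b\<in>carr G. \<forall>c c'.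
      (a, b, c) \<in> tri G \<and> (a, b, c') \<in> tri G \<longrightarrow> c = c')"

definition P2_obj :: "'a geom \<Rightarrow> bool" where
  "P2_obj G \<longleftrightarrow> pasch_geometry G \<and> sharp_geometry G"

definition geom_morphism :: "'a geom \<Rightarrow> 'b geom \<Rightarrow> ('a \<Rightarrow> 'b) \<Rightarrow> bool" where
  "geom_morphism G H f \<longleftrightarrow> (\<forall>x\<in>carr G. f x \<in> carr H) \<and> f (ident G) = ident H \<and>
     (\<forall>x y z. (x, y, z) \<in> tri G \<longrightarrow> (f x, f y, f z) \<in> tri H)"

definition geom_hom :: "'a geom \<Rightarrow> 'b geom \<Rightarrow> ('a \<Rightarrow> 'b) \<Rightarrow> bool" where
  "geom_hom G H f \<longleftrightarrow> geom_morphism G H f \<and>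
     (\<forall>x\<in>carr G. \<forall>y\<in>carr G. \<forall>b. (f x, f y, b) \<in> tri H \<longrightarrow>
        (\<exists>z\<in>carr G. b = f z \<and> (x, y, z) \<in> tri G))"

definition P2_arrow :: "'a geom \<Rightarrow> 'b geom \<Rightarrow> ('a \<Rightarrow> 'b) \<Rightarrow> bool" where
  "P2_arrow G H f \<longleftrightarrow> P2_obj G \<and> P2_obj H \<and> geom_hom G H f"

definition pullback_geom ::
  "'a geom \<Rightarrow> 'b geom \<Rightarrow> ('a \<Rightarrow> 'x) \<Rightarrow> ('b \<Rightarrow> 'x) \<Rightarrow> ('a \<times> 'b) geom" where
  "pullback_geom A B f g =
     (let Y = {(a, b). a \<in> carr A \<and> b \<in> carr B \<and> f a = g b} in
      (Y, (ident A, ident B),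
       {((a1, b1), (a2, b2), (a3, b3)). (a1, a2, a3) \<in> tri A \<and> (b1, b2, b3) \<in> tri B}
         \<inter> (Y \<times> Y \<times> Y)))"

end

theory Submission
  imports Defs
begin

text \<open>
  Given arrows f : A \<rightarrow> X and g : B \<rightarrow> X, call (a, b) matched if f a = g b.  Everything rests
  on two transfer facts for triples: (i) a triple of A whose first two vertices are matched to
  points of B can be completed to a matched triple of B, because f preserves triples and g lifts
  them; (ii) since B is sharp, the completion is forced, so any triple of B matched at its first
  two vertices is matched at the third.  Homomorphisms also commute with the involution #.

  The pullback Y consists of the matched pairs with componentwise triples.  Its involution is
  computed componentwise, Pasch's axiom in Y follows componentwise with (ii) guaranteeing that
  the new point is matched, and sharpness is componentwise.  The projections are homomorphisms
  by (i), and the induced map (f', g') of a commuting cone lifts triples using the lifting of f'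
  and sharpness of B.
\<close>

lemma pasch_ident_carr: "pasch_geometry G \<Longrightarrow> ident G \<in> carr G"
  unfolding pasch_geometry_def by blast

lemma pasch_tri_carr:
  "pasch_geometry G \<Longrightarrow> (a, b, c) \<in> tri G \<Longrightarrow> a \<in> carr G \<and> b \<in> carr G \<and> c \<in> carr G"
  unfolding pasch_geometry_def by blast

lemma pasch_rotate: "pasch_geometry G \<Longrightarrow> (a, b, c) \<in> tri G \<Longrightarrow> (b, c, a) \<in> tri G"
  unfolding pasch_geometry_def by blast

lemma pasch_sharp_ident: "pasch_geometry G \<Longrightarrow> sharp_op G (ident G) = ident G"
  unfolding pasch_geometry_def by blast

lemma pasch_sharp_sharp: "pasch_geometry G \<Longrightarrow> a \<in> carr G \<Longrightarrow> sharp_op G (sharp_op G a) = a"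
  unfolding pasch_geometry_def by blast

lemma pasch_axiom:
  "pasch_geometry G \<Longrightarrow> (a1, a2, a3) \<in> tri G \<Longrightarrow> (a1, a4, a5) \<in> tri G \<Longrightarrow>
   \<exists>a6\<in>carr G. (a6, sharp_op G a4, a2) \<in> tri G \<and> (a6, a5, sharp_op G a3) \<in> tri G"
  unfolding pasch_geometry_def by blast

lemma pasch_sharp:
  assumes "pasch_geometry G" and "a \<in> carr G"
  shows "sharp_op G a \<in> carr G \<and> (a, sharp_op G a, ident G) \<in> tri G"
proof -
  have "\<exists>!b. b \<in> carr G \<and> (a, b, ident G) \<in> tri G"
    using assms unfolding pasch_geometry_def by blast
  then show ?thesis unfolding sharp_op_def by (rule theI')
qed

lemma pasch_sharp_unique:
  assumes G: "pasch_geometry G" and t: "(a, b, ident G) \<in> tri G"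
  shows "b = sharp_op G a"
proof -
  have a: "a \<in> carr G" and b: "b \<in> carr G" using pasch_tri_carr[OF G t] by auto
  have "\<exists>!b. b \<in> carr G \<and> (a, b, ident G) \<in> tri G"
    using G a unfolding pasch_geometry_def by blast
  then show ?thesis using pasch_sharp[OF G a] b t by blast
qed

text \<open>A criterion for computing a# in a geometry not yet known to satisfy the axioms.\<close>

lemma sharp_op_eqI:
  assumes "b \<in> carr G" and "(a, b, ident G) \<in> tri G"
    and "\<And>c. c \<in> carr G \<Longrightarrow> (a, c, ident G) \<in> tri G \<Longrightarrow> c = b"
  shows "sharp_op G a = b"
  unfolding sharp_op_def using assms by (intro the_equality) blast+

lemma sharp_third_unique:
  "sharp_geometry G \<Longrightarrow> a \<in> carr G \<Longrightarrow> b \<in> carr G \<Longrightarrow>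
   (a, b, c) \<in> tri G \<Longrightarrow> (a, b, c') \<in> tri G \<Longrightarrow> c = c'"
  unfolding sharp_geometry_def by blast

lemma morphism_carr: "geom_morphism G H f \<Longrightarrow> x \<in> carr G \<Longrightarrow> f x \<in> carr H"
  unfolding geom_morphism_def by blast

lemma morphism_ident: "geom_morphism G H f \<Longrightarrow> f (ident G) = ident H"
  unfolding geom_morphism_def by blast

lemma morphism_tri: "geom_morphism G H f \<Longrightarrow> (x, y, z) \<in> tri G \<Longrightarrow> (f x, f y, f z) \<in> tri H"
  unfolding geom_morphism_def by blast

lemma hom_morphism: "geom_hom G H f \<Longrightarrow> geom_morphism G H f"
  unfolding geom_hom_def by blast

lemma hom_lift:
  "geom_hom G H f \<Longrightarrow> x \<in> carr G \<Longrightarrow> y \<in> carr G \<Longrightarrow> (f x, f y, b) \<in> tri H \<Longrightarrow>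
   \<exists>z\<in>carr G. b = f z \<and> (x, y, z) \<in> tri G"
  unfolding geom_hom_def by blast

lemma morphism_sharp:
  assumes G: "pasch_geometry G" and H: "pasch_geometry H"
    and f: "geom_morphism G H f" and a: "a \<in> carr G"
  shows "f (sharp_op G a) = sharp_op H (f a)"
proof -
  have "(f a, f (sharp_op G a), f (ident G)) \<in> tri H"
    using morphism_tri[OF f] pasch_sharp[OF G a] by blast
  then show ?thesis using pasch_sharp_unique[OF H] morphism_ident[OF f] by metis
qed

section \<open>Transferring triples along a cospan\<close>

text \<open>(i) A triple of A matched at its first two vertices to points of B has a matched
  completion in B: push it to X by f and lift it back along g.\<close>

lemma matched_completion:
  assumes f: "geom_morphism A X f" and g: "geom_hom B X g"
    and t: "(a1, a2, a3) \<in> tri A" and b: "b1 \<in> carr B" "b2 \<in> carr B"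
    and m: "f a1 = g b1" "f a2 = g b2"
  shows "\<exists>b3\<in>carr B. (b1, b2, b3) \<in> tri B \<and> f a3 = g b3"
proof -
  have "(g b1, g b2, f a3) \<in> tri X" using morphism_tri[OF f t] m by simp
  then show ?thesis using hom_lift[OF g b] by metis
qed

text \<open>(ii) When B is sharp this completion is the only one, so matching propagates from the
  first two vertices of a pair of triples to the third.\<close>

lemma matched_third:
  assumes f: "geom_morphism A X f" and g: "geom_hom B X g"
    and B: "pasch_geometry B" "sharp_geometry B"
    and ta: "(a1, a2, a3) \<in> tri A" and tb: "(b1, b2, b3) \<in> tri B"
    and m: "f a1 = g b1" "f a2 = g b2"
  shows "f a3 = g b3"
proof -
  have b: "b1 \<in> carr B" "b2 \<in> carr B" using pasch_tri_carr[OF B(1) tb] by auto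
  obtain b3' where "(b1, b2, b3') \<in> tri B" and "f a3 = g b3'"
    using matched_completion[OF f g ta b m] by blast
  moreover have "b3' = b3" using sharp_third_unique[OF B(2) b] tb calculation(1) by blast
  ultimately show ?thesis by simp
qed

section \<open>The pullback geometry\<close>

locale P2_cospan =
  fixes A :: "'a geom" and B :: "'b geom" and X :: "'x geom"
    and f :: "'a \<Rightarrow> 'x" and g :: "'b \<Rightarrow> 'x"
  assumes f: "P2_arrow A X f" and g: "P2_arrow B X g"
begin

abbreviation Y :: "('a \<times> 'b) geom" where "Y \<equiv> pullback_geom A B f g"

lemma pasch_A: "pasch_geometry A" and sharp_A: "sharp_geometry A"
  and pasch_B: "pasch_geometry B" and sharp_B: "sharp_geometry B"
  and pasch_X: "pasch_geometry X"
  and hom_f: "geom_hom A X f" and hom_g: "geom_hom B X g"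
  using f g unfolding P2_arrow_def P2_obj_def by auto

lemmas mor_f = hom_morphism[OF hom_f] and mor_g = hom_morphism[OF hom_g]

lemma Y_carr: "(a, b) \<in> carr Y \<longleftrightarrow> a \<in> carr A \<and> b \<in> carr B \<and> f a = g b"
  by (simp add: pullback_geom_def carr_def Let_def)

lemma Y_ident: "ident Y = (ident A, ident B)"
  by (simp add: pullback_geom_def ident_def Let_def)

lemma Y_tri:
  "((a1, b1), (a2, b2), (a3, b3)) \<in> tri Y \<longleftrightarrow>
     (a1, a2, a3) \<in> tri A \<and> (b1, b2, b3) \<in> tri B \<and> f a1 = g b1 \<and> f a2 = g b2 \<and> f a3 = g b3"
  using pasch_tri_carr[OF pasch_A, of a1 a2 a3] pasch_tri_carr[OF pasch_B, of b1 b2 b3]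
  by (auto simp add: pullback_geom_def carr_def tri_def Let_def)

lemma Y_tri_carr: "tri Y \<subseteq> carr Y \<times> carr Y \<times> carr Y"
  by (auto simp add: pullback_geom_def carr_def tri_def Let_def)

lemma Y_ident_carr: "ident Y \<in> carr Y"
  using Y_carr Y_ident pasch_ident_carr[OF pasch_A] pasch_ident_carr[OF pasch_B]
    morphism_ident[OF mor_f] morphism_ident[OF mor_g] by simp

lemma sharp_matched: "(a, b) \<in> carr Y \<Longrightarrow> f (sharp_op A a) = g (sharp_op B b)"
  using Y_carr morphism_sharp[OF pasch_A pasch_X mor_f] morphism_sharp[OF pasch_B pasch_X mor_g]
  by metis

lemma Y_sharp_triple:
  assumes "(a, b) \<in> carr Y"
  shows "(sharp_op A a, sharp_op B b) \<in> carr Y"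
    and "((a, b), (sharp_op A a, sharp_op B b), ident Y) \<in> tri Y"
  using assms Y_carr Y_tri Y_ident pasch_sharp[OF pasch_A] pasch_sharp[OF pasch_B]
    sharp_matched morphism_ident[OF mor_f] morphism_ident[OF mor_g] by auto

lemma Y_sharp_unique:
  "((a, b), c, ident Y) \<in> tri Y \<Longrightarrow> c = (sharp_op A a, sharp_op B b)"
  using Y_ident Y_tri pasch_sharp_unique[OF pasch_A] pasch_sharp_unique[OF pasch_B]
  by (cases c) auto

lemma Y_sharp: "(a, b) \<in> carr Y \<Longrightarrow> sharp_op Y (a, b) = (sharp_op A a, sharp_op B b)"
  by (rule sharp_op_eqI) (use Y_sharp_triple Y_sharp_unique in auto)

text \<open>Pasch's axiom in Y: apply it in A and in B; the two new points are matched by (ii),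
  applied to the rotated triples (a4#, a2, a6) and (b4#, b2, b6).\<close>

lemma Y_pasch_axiom:
  assumes t1: "((a1, b1), (a2, b2), (a3, b3)) \<in> tri Y"
    and t2: "((a1, b1), (a4, b4), (a5, b5)) \<in> tri Y"
  shows "\<exists>y6\<in>carr Y. (y6, sharp_op Y (a4, b4), (a2, b2)) \<in> tri Y \<and>
                     (y6, (a5, b5), sharp_op Y (a3, b3)) \<in> tri Y"
proof -
  have ta: "(a1, a2, a3) \<in> tri A" "(a1, a4, a5) \<in> tri A"
    and tb: "(b1, b2, b3) \<in> tri B" "(b1, b4, b5) \<in> tri B"
    and m: "f a2 = g b2" "f a5 = g b5"
    using t1 t2 Y_tri by auto
  have c: "(a3, b3) \<in> carr Y" "(a4, b4) \<in> carr Y" using t1 t2 Y_tri_carr by auto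
  obtain a6 where a6: "a6 \<in> carr A" "(a6, sharp_op A a4, a2) \<in> tri A"
      "(a6, a5, sharp_op A a3) \<in> tri A"
    using pasch_axiom[OF pasch_A ta] by blast
  obtain b6 where b6: "b6 \<in> carr B" "(b6, sharp_op B b4, b2) \<in> tri B"
      "(b6, b5, sharp_op B b3) \<in> tri B"
    using pasch_axiom[OF pasch_B tb] by blast
  have m6: "f a6 = g b6"
    using matched_third[OF mor_f hom_g pasch_B sharp_B
        pasch_rotate[OF pasch_A a6(2)] pasch_rotate[OF pasch_B b6(2)] sharp_matched[OF c(2)] m(1)] .
  show ?thesis
  proof (intro bexI conjI)
    show "(a6, b6) \<in> carr Y" using Y_carr a6 b6 m6 by simp
    show "((a6, b6), sharp_op Y (a4, b4), (a2, b2)) \<in> tri Y"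
      using Y_sharp[OF c(2)] Y_tri a6 b6 m m6 sharp_matched[OF c(2)] by simp
    show "((a6, b6), (a5, b5), sharp_op Y (a3, b3)) \<in> tri Y"
      using Y_sharp[OF c(1)] Y_tri a6 b6 m m6 sharp_matched[OF c(1)] by simp
  qed
qed

lemma Y_pasch: "pasch_geometry Y"
  unfolding pasch_geometry_def
proof (intro conjI)
  show "ident Y \<in> carr Y" by (rule Y_ident_carr)
  show "tri Y \<subseteq> carr Y \<times> carr Y \<times> carr Y" by (rule Y_tri_carr)
  show "\<forall>y\<in>carr Y. \<exists>!c. c \<in> carr Y \<and> (y, c, ident Y) \<in> tri Y"
  proof (clarify)
    fix a b assume "(a, b) \<in> carr Y"
    then show "\<exists>!c. c \<in> carr Y \<and> ((a, b), c, ident Y) \<in> tri Y"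
      using Y_sharp_triple Y_sharp_unique by (intro ex1I[of _ "(sharp_op A a, sharp_op B b)"]) blast+
  qed
  show "sharp_op Y (ident Y) = ident Y"
    using Y_sharp Y_ident Y_ident_carr pasch_sharp_ident[OF pasch_A] pasch_sharp_ident[OF pasch_B]
    by simp
  show "\<forall>y\<in>carr Y. sharp_op Y (sharp_op Y y) = y"
    using Y_sharp Y_sharp_triple(1) Y_carr pasch_sharp_sharp[OF pasch_A] pasch_sharp_sharp[OF pasch_B]
    by auto
  show "\<forall>x y z. (x, y, z) \<in> tri Y \<longrightarrow> (y, z, x) \<in> tri Y"
    unfolding split_paired_All using Y_tri pasch_rotate[OF pasch_A] pasch_rotate[OF pasch_B]
    by blast
  show "\<forall>y1 y2 y3 y4 y5. (y1, y2, y3) \<in> tri Y \<and> (y1, y4, y5) \<in> tri Y \<longrightarrow>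
      (\<exists>y6\<in>carr Y. (y6, sharp_op Y y4, y2) \<in> tri Y \<and> (y6, y5, sharp_op Y y3) \<in> tri Y)"
    unfolding split_paired_All using Y_pasch_axiom by blast
qed

lemma Y_sharp_geometry: "sharp_geometry Y"
  unfolding sharp_geometry_def
proof (clarify)
  fix a1 b1 a2 b2 a3 b3 a3' b3'
  assume c: "(a1, b1) \<in> carr Y" "(a2, b2) \<in> carr Y"
    and t: "((a1, b1), (a2, b2), (a3, b3)) \<in> tri Y" "((a1, b1), (a2, b2), (a3', b3')) \<in> tri Y"
  show "a3 = a3' \<and> b3 = b3'"
    using c t Y_carr Y_tri sharp_third_unique[OF sharp_A] sharp_third_unique[OF sharp_B] by meson
qed

lemma Y_obj: "P2_obj Y"
  unfolding P2_obj_def using Y_pasch Y_sharp_geometry by blast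

text \<open>The projections are homomorphisms: a triple over one component of two points of Y
  is completed in the other component by (i).\<close>

lemma fst_arrow: "P2_arrow Y A fst"
  unfolding P2_arrow_def geom_hom_def geom_morphism_def
proof (intro conjI ballI allI impI)
  show "P2_obj Y" "P2_obj A" using Y_obj f unfolding P2_arrow_def by auto
  show "fst y \<in> carr A" if "y \<in> carr Y" for y using that Y_carr by (cases y) auto
  show "fst (ident Y) = ident A" using Y_ident by simp
  show "(fst x, fst y, fst z) \<in> tri A" if "(x, y, z) \<in> tri Y" for x y z
    using that Y_tri by (cases x, cases y, cases z) auto
  fix y1 y2 a assume y: "y1 \<in> carr Y" "y2 \<in> carr Y" and t: "(fst y1, fst y2, a) \<in> tri A"
  obtain a1 b1 a2 b2 where p: "y1 = (a1, b1)" "y2 = (a2, b2)" by fastforce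
  have c: "b1 \<in> carr B" "b2 \<in> carr B" and m: "f a1 = g b1" "f a2 = g b2"
    using y p Y_carr by auto
  obtain b where b: "(b1, b2, b) \<in> tri B" "f a = g b"
    using matched_completion[OF mor_f hom_g _ c m] t p by auto
  have t_ab: "(y1, y2, (a, b)) \<in> tri Y" using p t b m Y_tri by simp
  moreover have "(a, b) \<in> carr Y" using t_ab Y_tri_carr by blast
  ultimately show "\<exists>z\<in>carr Y. a = fst z \<and> (y1, y2, z) \<in> tri Y" by (metis fst_conv)
qed

lemma snd_arrow: "P2_arrow Y B snd"
  unfolding P2_arrow_def geom_hom_def geom_morphism_def
proof (intro conjI ballI allI impI)
  show "P2_obj Y" "P2_obj B" using Y_obj g unfolding P2_arrow_def by auto
  show "snd y \<in> carr B" if "y \<in> carr Y" for y using that Y_carr by (cases y) auto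
  show "snd (ident Y) = ident B" using Y_ident by simp
  show "(snd x, snd y, snd z) \<in> tri B" if "(x, y, z) \<in> tri Y" for x y z
    using that Y_tri by (cases x, cases y, cases z) auto
  fix y1 y2 b assume y: "y1 \<in> carr Y" "y2 \<in> carr Y" and t: "(snd y1, snd y2, b) \<in> tri B"
  obtain a1 b1 a2 b2 where p: "y1 = (a1, b1)" "y2 = (a2, b2)" by fastforce
  have c: "a1 \<in> carr A" "a2 \<in> carr A" and m: "g b1 = f a1" "g b2 = f a2"
    using y p Y_carr by auto
  obtain a where a: "(a1, a2, a) \<in> tri A" "g b = f a"
    using matched_completion[OF mor_g hom_f _ c m] t p by auto
  have t_ab: "(y1, y2, (a, b)) \<in> tri Y" using p t a m Y_tri by simp
  moreover have "(a, b) \<in> carr Y" using t_ab Y_tri_carr by blast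
  ultimately show "\<exists>z\<in>carr Y. b = snd z \<and> (y1, y2, z) \<in> tri Y" by (metis snd_conv)
qed

text \<open>The mediating map of a commuting cone (f', g') is a homomorphism: a triple over
  (f' x, g' x), (f' y, g' y) lifts along f' to some z, and its B-component is forced to be
  g' z by sharpness of B.\<close>

lemma pair_arrow:
  assumes f': "P2_arrow Z A f'" and g': "P2_arrow Z B g'"
    and comm: "\<forall>x\<in>carr Z. f (f' x) = g (g' x)"
  shows "P2_arrow Z Y (\<lambda>x. (f' x, g' x))"
proof -
  have Z: "P2_obj Z" "pasch_geometry Z" and hf': "geom_hom Z A f'" and hg': "geom_hom Z B g'"
    using f' g' unfolding P2_arrow_def P2_obj_def by auto
  note mf' = hom_morphism[OF hf'] and mg' = hom_morphism[OF hg']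
  show ?thesis
    unfolding P2_arrow_def geom_hom_def geom_morphism_def
  proof (intro conjI ballI allI impI)
    show "P2_obj Z" "P2_obj Y" using Z(1) Y_obj by auto
    show "(f' x, g' x) \<in> carr Y" if "x \<in> carr Z" for x
      using that comm Y_carr morphism_carr[OF mf'] morphism_carr[OF mg'] by auto
    show "(f' (ident Z), g' (ident Z)) = ident Y"
      using Y_ident morphism_ident[OF mf'] morphism_ident[OF mg'] by simp
    show "((f' x, g' x), (f' y, g' y), (f' z, g' z)) \<in> tri Y" if "(x, y, z) \<in> tri Z" for x y z
      using that Y_tri morphism_tri[OF mf'] morphism_tri[OF mg'] comm pasch_tri_carr[OF Z(2)]
      by meson
    fix x y p assume x: "x \<in> carr Z" and y: "y \<in> carr Z"
      and t: "((f' x, g' x), (f' y, g' y), p) \<in> tri Y"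
    obtain a b where p: "p = (a, b)" by (cases p)
    have ta: "(f' x, f' y, a) \<in> tri A" and tb: "(g' x, g' y, b) \<in> tri B" using t p Y_tri by auto
    obtain z where z: "z \<in> carr Z" "a = f' z" "(x, y, z) \<in> tri Z"
      using hom_lift[OF hf' x y ta] by blast
    have "b = g' z"
      using sharp_third_unique[OF sharp_B _ _ tb morphism_tri[OF mg' z(3)]]
        morphism_carr[OF mg'] x y by blast
    then show "\<exists>z\<in>carr Z. p = (f' z, g' z) \<and> (x, y, z) \<in> tri Z" using z p by auto
  qed
qed

end

theorem theorem3p8:
  fixes A :: "'a geom" and B :: "'b geom" and X :: "'x geom"
    and f :: "'a \<Rightarrow> 'x" and g :: "'b \<Rightarrow> 'x"
  assumes f: "P2_arrow A X f" and g: "P2_arrow B X g"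
  defines "Y \<equiv> pullback_geom A B f g"
  shows "P2_obj Y \<and> P2_arrow Y A fst \<and> P2_arrow Y B snd \<and>
         (\<forall>y\<in>carr Y. f (fst y) = g (snd y)) \<and>
         (\<forall>(Z :: 'z geom) f' g'.
            P2_arrow Z A f' \<and> P2_arrow Z B g' \<and> (\<forall>x\<in>carr Z. f (f' x) = g (g' x)) \<longrightarrow>
              P2_arrow Z Y (\<lambda>x. (f' x, g' x)) \<and>
              (\<forall>x\<in>carr Z. fst (f' x, g' x) = f' x \<and> snd (f' x, g' x) = g' x) \<and>
              (\<forall>\<epsilon>. P2_arrow Z Y \<epsilon> \<and> (\<forall>x\<in>carr Z. fst (\<epsilon> x) = f' x \<and> snd (\<epsilon> x) = g' x)
                   \<longrightarrow> (\<forall>x\<in>carr Z. \<epsilon> x = (f' x, g' x))))"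
proof -
  interpret P2_cospan A B X f g using f g by unfold_locales
  have commutes: "\<forall>y\<in>carr Y. f (fst y) = g (snd y)"
    unfolding Y_def using Y_carr by auto
  have mediating: "P2_arrow Z Y (\<lambda>x. (f' x, g' x))"
    if "P2_arrow Z A f'" "P2_arrow Z B g'" "\<forall>x\<in>carr Z. f (f' x) = g (g' x)"
    for Z :: "'z geom" and f' g'
    using pair_arrow[OF that] unfolding Y_def .
  show ?thesis
    using Y_obj fst_arrow snd_arrow commutes mediating unfolding Y_def
    by (auto simp: prod_eq_iff)
qed

end
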